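(* For every $d\in\mathbb{N}$ and every game $\mathcal{M}\subseteq\mathbb{N}_0^d$, the sequence $(\mathcal{M}^i)_{i\ge0}$ converges, i.e. the limit game $\mathcal{M}^\infty$ exists, and $\mathcal{M}^\infty$ is reflexive.
   Context: For $d\in\mathbb{N}$ a game is a set $\mathcal{M}\subseteq\mathbb{N}_0^d$ of moves. From position $\boldsymbol x\in\mathbb{N}_0^d$ a player may move to $\boldsymbol y\in\mathbb{N}_0^d$ iff $\boldsymbol x-\boldsymbol y\in\mathcal{M}$. Misère play: a player who cannot move wins. If $\boldsymbol 0\in\mathcal{M}$, $P(\mathcal{M})=\varnothing$. Otherwise: a position is an N-position if it has no option or some option is a P-position; otherwise it is a P-position; $P(\mathcal{M})$ denotes the set of P-positions. The $\star$-operator is $\mathcal{M}^\star=P(\mathcal{M})$; $\mathcal{M}^0=\mathcal{M}$, $\mathcal{M}^i=(\mathcal{M}^{i-1})^\star$. The limit $\mathcal{M}^\infty$ exists if for every $\boldsymbol x\in\mathbb{N}_0^d$ either $\boldsymbol x\in\mathcal{M}^i$ for all sufficiently large $i$ or $\boldsymbol x\notin\mathcal{M}^i$ for all sufficiently large $i$; then $\mathcal{M}^\infty$ is the set of $\boldsymbol x$ of the first kind. A game is reflexive if $\mathcal{M}=\mathcal{M}^\star$. *)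

theory Defs
  imports Main
begin

text \<open>Positions in N_0^d are functions from a finite index type 'd (with d = CARD('d) \<ge> 1)
  to nat. From x one may move to y iff x - y \<in> M
  (componentwise, with y \<le> x componentwise so that the difference lies in N_0^d).\<close>

definition is_option :: "('d \<Rightarrow> nat) set \<Rightarrow> ('d \<Rightarrow> nat) \<Rightarrow> ('d \<Rightarrow> nat) \<Rightarrow> bool" where
  "is_option M x y \<longleftrightarrow> (\<forall>i. y i \<le> x i) \<and> (\<lambda>i. x i - y i) \<in> M"

text \<open>Strict option relation (well-founded: coordinate sums strictly decrease).\<close>
definition option_rel :: "('d::finite \<Rightarrow> nat) set \<Rightarrow> (('d \<Rightarrow> nat) \<times> ('d \<Rightarrow> nat)) set" where
  "option_rel M = {(y, x). is_option M x y \<and> y \<noteq> x}"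

text \<open>Misere P-position predicate, by well-founded recursion: x is a P-position iff
  x has an option and no option of x is a P-position (for 0 \<notin> M every option is strict).\<close>
definition is_P :: "('d::finite \<Rightarrow> nat) set \<Rightarrow> ('d \<Rightarrow> nat) \<Rightarrow> bool" where
  "is_P M = wfrec (option_rel M)
     (\<lambda>f x. (\<exists>y. is_option M x y) \<and> (\<forall>y. is_option M x y \<and> y \<noteq> x \<longrightarrow> \<not> f y))"

definition Ppos :: "('d::finite \<Rightarrow> nat) set \<Rightarrow> ('d \<Rightarrow> nat) set" where
  "Ppos M = (if (\<lambda>_. 0) \<in> M then {} else {x. is_P M x})"

definition star_game :: "('d::finite \<Rightarrow> nat) set \<Rightarrow> ('d \<Rightarrow> nat) set" where
  "star_game M = Ppos M"

definition star_iter :: "('d::finite \<Rightarrow> nat) set \<Rightarrow> nat \<Rightarrow> ('d \<Rightarrow> nat) set" where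
  "star_iter M i = (star_game ^^ i) M"

definition limit_exists :: "('d::finite \<Rightarrow> nat) set \<Rightarrow> bool" where
  "limit_exists M \<longleftrightarrow> (\<forall>x. (\<exists>N. \<forall>i\<ge>N. x \<in> star_iter M i) \<or> (\<exists>N. \<forall>i\<ge>N. x \<notin> star_iter M i))"

definition limit_game :: "('d::finite \<Rightarrow> nat) set \<Rightarrow> ('d \<Rightarrow> nat) set" where
  "limit_game M = {x. \<exists>N. \<forall>i\<ge>N. x \<in> star_iter M i}"

definition reflexive_game :: "('d::finite \<Rightarrow> nat) set \<Rightarrow> bool" where
  "reflexive_game M \<longleftrightarrow> M = star_game M"

end

theory Submission
  imports Defs "HOL-Library.FuncSet"
begin

text \<open>Whether x is a P-position of a game A without the null move depends only on A restricted to the finite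
  box below x, and it depends on the membership of x itself only through the move to the origin.
  By induction on x, the restrictions of the iterates M^i to the box strictly below x are
  eventually those of the limit L; from then on x \<in> M^(i+1) \<longleftrightarrow> (C \<or> x \<in> M^i) \<and> B with constants
  B and C, a recurrence whose solutions are eventually constant. Hence every position eventually
  agrees with L, and comparing P(L) with M^(i+1) on a box where M^i agrees with L gives L = P(L).\<close>

lemma coordinate_sum_less:
  fixes x y :: "'d::finite \<Rightarrow> nat"
  assumes "\<forall>i. y i \<le> x i" "y \<noteq> x"
  shows "(\<Sum>i\<in>UNIV. y i) < (\<Sum>i\<in>UNIV. x i)"
proof -
  from assms obtain j where "y j < x j"
    by (metis ext le_neq_implies_less)
  with assms show ?thesis
    by (intro sum_strict_mono_ex1) auto
qed

lemma wf_option_rel: "wf (option_rel M)"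
proof (rule wf_subset[OF wf_measure[of "\<lambda>x. \<Sum>i\<in>UNIV. x i"]])
  show "option_rel M \<subseteq> measure (\<lambda>x. \<Sum>i\<in>UNIV. x i)"
    by (auto simp: option_rel_def is_option_def intro: coordinate_sum_less)
qed

lemma is_P_unfold:
  "is_P M x \<longleftrightarrow> (\<exists>y. is_option M x y) \<and> (\<forall>y. is_option M x y \<and> y \<noteq> x \<longrightarrow> \<not> is_P M y)"
  unfolding is_P_def by (subst wfrec[OF wf_option_rel]) (simp add: cut_def option_rel_def)

lemma is_option_self_iff: "is_option M x x \<longleftrightarrow> (\<lambda>_. 0) \<in> M"
  by (simp add: is_option_def)

lemma is_option_strictly_below:
  assumes "(\<lambda>_. 0) \<notin> M" "is_option M x y"
  shows "(\<forall>i. y i \<le> x i) \<and> y \<noteq> x"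
  using assms is_option_self_iff by (metis is_option_def)

lemma is_P_iff:
  assumes "(\<lambda>_. 0) \<notin> M"
  shows "is_P M x \<longleftrightarrow> (\<exists>y. is_option M x y) \<and> (\<forall>y. is_option M x y \<longrightarrow> \<not> is_P M y)"
  using assms by (subst is_P_unfold) (auto simp: is_option_self_iff)

lemma not_is_P_zero:
  assumes "(\<lambda>_. 0) \<notin> M"
  shows "\<not> is_P M (\<lambda>_. 0)"
  using assms by (subst is_P_unfold) (auto simp: is_option_def)

lemma Ppos_eq:
  assumes "(\<lambda>_. 0) \<notin> M"
  shows "Ppos M = {x. is_P M x}"
  using assms by (simp add: Ppos_def)

lemma zero_notin_Ppos: "(\<lambda>_. 0) \<notin> Ppos M"
  by (cases "(\<lambda>_. 0) \<in> M") (simp_all add: Ppos_def not_is_P_zero)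

definition down :: "('d \<Rightarrow> nat) \<Rightarrow> ('d \<Rightarrow> nat) set" where
  "down x = {m. \<forall>i. m i \<le> x i}"

lemma finite_down: "finite (down (x :: 'd::finite \<Rightarrow> nat))"
proof (rule finite_subset)
  show "down x \<subseteq> PiE UNIV (\<lambda>i. {..x i})"
    by (auto simp: down_def PiE_def)
qed (auto intro: finite_PiE)

lemma down_subset_strictly_below:
  assumes "\<forall>i. y i \<le> x i" "y \<noteq> x"
  shows "down y \<subseteq> down x - {x}"
  using assms by (auto simp: down_def fun_eq_iff intro: le_trans le_antisym)

lemma is_P_local:
  fixes x :: "'d::finite \<Rightarrow> nat"
  assumes "(\<lambda>_. 0) \<notin> A" "(\<lambda>_. 0) \<notin> B" "A \<inter> down x = B \<inter> down x"
  shows "is_P A x \<longleftrightarrow> is_P B x"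
  using assms(3)
proof (induction x rule: measure_induct_rule[of "\<lambda>x. \<Sum>i\<in>UNIV. x i"])
  case (less x)
  have options: "is_option A x y \<longleftrightarrow> is_option B x y" for y
    using less.prems by (auto simp: is_option_def down_def set_eq_iff)
  have P_positions: "is_P A y \<longleftrightarrow> is_P B y" if "is_option A x y" for y
  proof (rule less.IH)
    have below: "\<forall>i. y i \<le> x i" "y \<noteq> x"
      using is_option_strictly_below[OF assms(1) that] by auto
    then show "(\<Sum>i\<in>UNIV. y i) < (\<Sum>i\<in>UNIV. x i)"
      by (rule coordinate_sum_less)
    have "down y \<subseteq> down x"
      using down_subset_strictly_below[OF below] by blast
    with less.prems show "A \<inter> down y = B \<inter> down y"
      by blast
  qed
  show ?case
    unfolding is_P_iff[OF assms(1), of x] is_P_iff[OF assms(2), of x]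
    using options P_positions by blast
qed

text \<open>The moves to y \<noteq> 0 test membership of x - y in the box strictly below x, on which A
  agrees with L; the move to 0 tests x \<in> A and never leads to a P-position.\<close>

lemma is_P_recurrence:
  fixes x :: "'d::finite \<Rightarrow> nat"
  assumes "(\<lambda>_. 0) \<notin> A" "(\<lambda>_. 0) \<notin> L" "A \<inter> (down x - {x}) = L \<inter> (down x - {x})"
  shows "is_P A x \<longleftrightarrow>
    ((\<exists>y. y \<noteq> (\<lambda>_. 0) \<and> is_option L x y) \<or> x \<in> A) \<and>
    (\<forall>y. y \<noteq> (\<lambda>_. 0) \<and> is_option L x y \<longrightarrow> \<not> is_P L y)"
proof -
  have options: "is_option A x y \<longleftrightarrow> is_option L x y" if "y \<noteq> (\<lambda>_. 0)" for y
  proof -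
    have "(\<lambda>k. x k - y k) \<in> down x - {x}" if "\<forall>k. y k \<le> x k"
    proof -
      from \<open>y \<noteq> (\<lambda>_. 0)\<close> obtain j where "y j \<noteq> 0" by auto
      with that have "x j - y j \<noteq> x j"
        by (metis diff_less less_irrefl_nat not_gr_zero not_le le_less_trans)
      then show ?thesis by (auto simp: down_def fun_eq_iff)
    qed
    with assms(3) show ?thesis
      unfolding is_option_def by blast
  qed
  have P_positions: "is_P A y \<longleftrightarrow> is_P L y" if "is_option A x y" for y
  proof (rule is_P_local[OF assms(1,2)])
    have "\<forall>k. y k \<le> x k" "y \<noteq> x"
      using is_option_strictly_below[OF assms(1) that] by auto
    with assms(3) show "A \<inter> down y = L \<inter> down y"
      using down_subset_strictly_below by blast
  qed
  have zero_option: "is_option A x (\<lambda>_. 0) \<longleftrightarrow> x \<in> A"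
    by (simp add: is_option_def)
  have "(\<exists>y. is_option A x y) \<longleftrightarrow> (\<exists>y. y \<noteq> (\<lambda>_. 0) \<and> is_option L x y) \<or> x \<in> A"
    using options zero_option by metis
  moreover have "(\<forall>y. is_option A x y \<longrightarrow> \<not> is_P A y) \<longleftrightarrow>
      (\<forall>y. y \<noteq> (\<lambda>_. 0) \<and> is_option L x y \<longrightarrow> \<not> is_P L y)"
    using options P_positions not_is_P_zero[OF assms(1)] by metis
  ultimately show ?thesis
    by (simp only: is_P_iff[OF assms(1), of x])
qed

lemma star_iter_Suc: "star_iter M (Suc i) = Ppos (star_iter M i)"
  by (simp add: star_iter_def star_game_def)

lemma zero_notin_star_iter_Suc: "(\<lambda>_. 0) \<notin> star_iter M (Suc i)"
  by (simp add: star_iter_Suc zero_notin_Ppos)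

lemma mem_star_iter_Suc_Suc: "x \<in> star_iter M (Suc (Suc i)) \<longleftrightarrow> is_P (star_iter M (Suc i)) x"
  by (subst star_iter_Suc) (simp add: Ppos_eq[OF zero_notin_star_iter_Suc])

lemma zero_notin_limit_game: "(\<lambda>_. 0) \<notin> limit_game M"
proof
  assume "(\<lambda>_. 0) \<in> limit_game M"
  then obtain N where "\<forall>i\<ge>N. (\<lambda>_. 0) \<in> star_iter M i"
    by (auto simp: limit_game_def)
  then show False
    using zero_notin_star_iter_Suc[of M N] by auto
qed

lemma eventually_agree_on_finite:
  assumes "finite S" "\<forall>y\<in>S. \<forall>\<^sub>F i in F. y \<in> A i \<longleftrightarrow> y \<in> L"
  shows "\<forall>\<^sub>F i in F. A i \<inter> S = L \<inter> S"
  using eventually_ball_finite[OF assms] by (rule eventually_mono) blast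

lemma eventually_constant_if_recurrence:
  assumes "\<forall>\<^sub>F i in sequentially. P (Suc i) \<longleftrightarrow> (C \<or> P i) \<and> B"
  shows "\<exists>b. \<forall>\<^sub>F i in sequentially. P i = b"
proof (cases "B \<and> \<not> C")
  case True
  from assms obtain N where N: "\<forall>i\<ge>N. P (Suc i) = P i"
    using True by (auto simp: eventually_sequentially)
  have "P i = P N" if "i \<ge> N" for i
    using that by (induction i rule: dec_induct) (use N in auto)
  then show ?thesis
    by (auto simp: eventually_sequentially)
next
  case False
  with assms have "\<forall>\<^sub>F i in sequentially. P (Suc i) = (C \<and> B)"
    by (auto elim: eventually_mono)
  then show ?thesis
    using eventually_sequentially_Suc[of "\<lambda>i. P i = (C \<and> B)"] by blast
qed

lemma eventually_const_eq_ultimately: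
  assumes "\<forall>\<^sub>F i in sequentially. P i = b"
  shows "\<forall>\<^sub>F i in sequentially. P i = (\<exists>N. \<forall>i\<ge>N. P i)"
proof -
  have "b = (\<exists>N. \<forall>i\<ge>N. P i)"
  proof
    show "b \<Longrightarrow> \<exists>N. \<forall>i\<ge>N. P i"
      using assms by (auto simp: eventually_sequentially)
    show "\<exists>N. \<forall>i\<ge>N. P i \<Longrightarrow> b"
      using eventually_conj[OF assms] by (auto simp: eventually_sequentially)
  qed
  with assms show ?thesis
    by simp
qed

lemma eventually_mem_star_iter_iff_limit_game:
  fixes M :: "('d::finite \<Rightarrow> nat) set"
  shows "\<forall>\<^sub>F i in sequentially. x \<in> star_iter M i \<longleftrightarrow> x \<in> limit_game M"
proof (induction x rule: measure_induct_rule[of "\<lambda>x. \<Sum>i\<in>UNIV. x i"])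
  case (less x)
  define L where "L = limit_game M"
  define C where "C = (\<exists>y. y \<noteq> (\<lambda>_. 0) \<and> is_option L x y)"
  define B where "B = (\<forall>y. y \<noteq> (\<lambda>_. 0) \<and> is_option L x y \<longrightarrow> \<not> is_P L y)"
  have "\<forall>y\<in>down x - {x}. \<forall>\<^sub>F i in sequentially. y \<in> star_iter M i \<longleftrightarrow> y \<in> L"
    unfolding L_def using less.IH coordinate_sum_less by (auto simp: down_def)
  then have "\<forall>\<^sub>F i in sequentially. star_iter M i \<inter> (down x - {x}) = L \<inter> (down x - {x})"
    using finite_down by (blast intro: eventually_agree_on_finite)
  then have "\<forall>\<^sub>F i in sequentially.
      star_iter M (Suc i) \<inter> (down x - {x}) = L \<inter> (down x - {x})"
    using eventually_sequentially_Suc[of "\<lambda>i. star_iter M i \<inter> (down x - {x}) = L \<inter> (down x - {x})"]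
    by blast
  then have "\<forall>\<^sub>F i in sequentially.
      x \<in> star_iter M (Suc (Suc i)) \<longleftrightarrow> (C \<or> x \<in> star_iter M (Suc i)) \<and> B"
    unfolding C_def B_def L_def
    by (rule eventually_mono)
      (simp add: mem_star_iter_Suc_Suc is_P_recurrence zero_notin_star_iter_Suc zero_notin_limit_game)
  then obtain b where "\<forall>\<^sub>F i in sequentially. x \<in> star_iter M (Suc i) \<longleftrightarrow> b"
    using eventually_constant_if_recurrence[of "\<lambda>i. x \<in> star_iter M (Suc i)"] by blast
  then have "\<forall>\<^sub>F i in sequentially. x \<in> star_iter M i \<longleftrightarrow> b"
    using eventually_sequentially_Suc[of "\<lambda>i. x \<in> star_iter M i \<longleftrightarrow> b"] by blast
  then show ?case
    unfolding limit_game_def mem_Collect_eq by (rule eventually_const_eq_ultimately)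
qed

lemma limit_exists_star_iter:
  fixes M :: "('d::finite \<Rightarrow> nat) set"
  shows "limit_exists M"
  unfolding limit_exists_def
proof
  fix x :: "'d \<Rightarrow> nat"
  show "(\<exists>N. \<forall>i\<ge>N. x \<in> star_iter M i) \<or> (\<exists>N. \<forall>i\<ge>N. x \<notin> star_iter M i)"
    using eventually_mem_star_iter_iff_limit_game[of x M]
    by (cases "x \<in> limit_game M") (auto simp: eventually_sequentially)
qed

lemma mem_limit_game_iff_is_P:
  fixes M :: "('d::finite \<Rightarrow> nat) set"
  shows "x \<in> limit_game M \<longleftrightarrow> is_P (limit_game M) x"
proof -
  let ?L = "limit_game M"
  have "\<forall>\<^sub>F i in sequentially. star_iter M i \<inter> down x = ?L \<inter> down x"
    using eventually_mem_star_iter_iff_limit_game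
    by (blast intro: eventually_agree_on_finite[OF finite_down])
  then obtain N where N: "\<And>i. i \<ge> N \<Longrightarrow> star_iter M i \<inter> down x = ?L \<inter> down x"
    by (auto simp: eventually_sequentially)
  have "x \<in> ?L \<longleftrightarrow> x \<in> star_iter M (Suc (Suc N))"
    using N[of "Suc (Suc N)"] by (auto simp: down_def)
  also have "\<dots> \<longleftrightarrow> is_P (star_iter M (Suc N)) x"
    by (rule mem_star_iter_Suc_Suc)
  also have "\<dots> \<longleftrightarrow> is_P ?L x"
    using N[of "Suc N"] by (simp add: is_P_local zero_notin_star_iter_Suc zero_notin_limit_game)
  finally show ?thesis .
qed

theorem theorem3:
  fixes M :: "('d::finite \<Rightarrow> nat) set"
  shows "limit_exists M \<and> reflexive_game (limit_game M)"
proof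
  show "limit_exists M"
    by (rule limit_exists_star_iter)
  show "reflexive_game (limit_game M)"
    using mem_limit_game_iff_is_P[of _ M]
    by (auto simp: reflexive_game_def star_game_def Ppos_eq[OF zero_notin_limit_game])
qed

end
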